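(* Let $G$ be a finite group, and let $a_1,a_2,a_3,a_4$ be independent uniformly random elements of $G$. Then \[ Pr(a_1a_2a_3a_4=a_2a_4a_1a_3)=Pr^4(G)\quad\text{and}\quad Pr(a_1a_2a_3a_4=a_3a_1a_4a_2)=Pr^4(G), \] where $Pr^4(G)$ is the probability that $a_1a_2a_3a_4=a_4a_3a_2a_1$. *)

theory Defs
  imports Complex_Main "HOL-Algebra.Group"
begin

definition prob4 :: "('a, 'b) monoid_scheme \<Rightarrow> ('a \<Rightarrow> 'a \<Rightarrow> 'a \<Rightarrow> 'a \<Rightarrow> bool) \<Rightarrow> real" where
  "prob4 G P = real (card {(a1, a2, a3, a4). a1 \<in> carrier G \<and> a2 \<in> carrier G \<and>
       a3 \<in> carrier G \<and> a4 \<in> carrier G \<and> P a1 a2 a3 a4}) / real (card (carrier G)) ^ 4"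

definition Pr4 :: "('a, 'b) monoid_scheme \<Rightarrow> real" where
  "Pr4 G = prob4 G (\<lambda>a1 a2 a3 a4.
     a1 \<otimes>\<^bsub>G\<^esub> a2 \<otimes>\<^bsub>G\<^esub> a3 \<otimes>\<^bsub>G\<^esub> a4 = a4 \<otimes>\<^bsub>G\<^esub> a3 \<otimes>\<^bsub>G\<^esub> a2 \<otimes>\<^bsub>G\<^esub> a1)"

end

theory Submission
  imports Defs
begin

text \<open>Each of the two word equations is carried onto the reversal equation
  a1 a2 a3 a4 = a4 a3 a2 a1 by an invertible substitution of the variables, which
  permutes G \<times> G \<times> G \<times> G and therefore preserves the number of solutions. For
  a2 a4 a1 a3 the substitution (x, b, c, w) \<mapsto> (b x, b, c, w c) turns both sides into
  the two sides of x b c w = w c b x conjugated by b on the left and c on the right; for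
  a3 a1 a4 a2 the substitution (x1, x2, x3, x4) \<mapsto> (x2 x4\<inverse>, x1, x2 x3, x4) turns
  them into the two sides of the reversal equation left-multiplied by x2 x4\<inverse>.\<close>

lemma card_filter_eq_if_bij_betw:
  assumes "bij_betw f A A" and "\<And>x. x \<in> A \<Longrightarrow> P x \<longleftrightarrow> Q (f x)"
  shows "card {x \<in> A. P x} = card {x \<in> A. Q x}"
proof -
  have "f ` {x \<in> A. P x} = {y \<in> A. Q y}"
    using assms by (force simp: bij_betw_def)
  then have "bij_betw f {x \<in> A. P x} {y \<in> A. Q y}"
    by (intro bij_betw_subset[OF assms(1)]) auto
  then show ?thesis
    by (rule bij_betw_same_card)
qed

abbreviation carrier4 :: "('a, 'b) monoid_scheme \<Rightarrow> ('a \<times> 'a \<times> 'a \<times> 'a) set" where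
  "carrier4 G \<equiv> carrier G \<times> carrier G \<times> carrier G \<times> carrier G"

lemma prob4_eq_card_carrier4:
  "prob4 G P = real (card {x \<in> carrier4 G. case_prod (\<lambda>a1. case_prod (\<lambda>a2. case_prod (P a1 a2))) x})
     / real (card (carrier G)) ^ 4"
proof -
  have "{(a1, a2, a3, a4). a1 \<in> carrier G \<and> a2 \<in> carrier G \<and> a3 \<in> carrier G \<and> a4 \<in> carrier G
          \<and> P a1 a2 a3 a4}
      = {x \<in> carrier4 G. case_prod (\<lambda>a1. case_prod (\<lambda>a2. case_prod (P a1 a2))) x}"
    by auto
  then show ?thesis
    unfolding prob4_def by simp
qed

lemma prob4_eq_if_bij_betw:
  assumes "bij_betw f (carrier4 G) (carrier4 G)"
    and "\<And>a1 a2 a3 a4. \<lbrakk>a1 \<in> carrier G; a2 \<in> carrier G; a3 \<in> carrier G; a4 \<in> carrier G\<rbrakk> \<Longrightarrow>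
           P a1 a2 a3 a4 \<longleftrightarrow> (case f (a1, a2, a3, a4) of (b1, b2, b3, b4) \<Rightarrow> Q b1 b2 b3 b4)"
  shows "prob4 G P = prob4 G Q"
proof -
  let ?P = "case_prod (\<lambda>a1. case_prod (\<lambda>a2. case_prod (P a1 a2)))"
  let ?Q = "case_prod (\<lambda>a1. case_prod (\<lambda>a2. case_prod (Q a1 a2)))"
  have "card {x \<in> carrier4 G. ?P x} = card {x \<in> carrier4 G. ?Q x}"
    using assms(2) by (intro card_filter_eq_if_bij_betw[OF assms(1)]) (auto split: prod.splits)
  then show ?thesis
    unfolding prob4_eq_card_carrier4 by simp
qed

context group
begin

lemma inv_mult_cancel_left [simp]:
  "a \<in> carrier G \<Longrightarrow> x \<in> carrier G \<Longrightarrow> inv a \<otimes> (a \<otimes> x) = x"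
  by (simp add: m_assoc [symmetric])

lemma mult_inv_cancel_left [simp]:
  "a \<in> carrier G \<Longrightarrow> x \<in> carrier G \<Longrightarrow> a \<otimes> (inv a \<otimes> x) = x"
  by (simp add: m_assoc [symmetric])

lemma bij_betw_substitution_2413:
  "bij_betw (\<lambda>(x, b, c, w). (b \<otimes> x, b, c, w \<otimes> c)) (carrier4 G) (carrier4 G)"
  by (rule bij_betw_byWitness[where f' = "\<lambda>(a, b, c, d). (inv b \<otimes> a, b, c, d \<otimes> inv c)"])
     (auto simp: m_assoc)

lemma bij_betw_substitution_3142:
  "bij_betw (\<lambda>(x1, x2, x3, x4). (x2 \<otimes> inv x4, x1, x2 \<otimes> x3, x4)) (carrier4 G) (carrier4 G)"
  by (rule bij_betw_byWitness[where f' = "\<lambda>(a, b, c, d). (b, a \<otimes> d, inv (a \<otimes> d) \<otimes> c, d)"])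
     (auto simp: m_assoc inv_mult_group)

lemma reversal_iff_word_2413:
  assumes "x \<in> carrier G" "b \<in> carrier G" "c \<in> carrier G" "w \<in> carrier G"
  shows "x \<otimes> b \<otimes> c \<otimes> w = w \<otimes> c \<otimes> b \<otimes> x
     \<longleftrightarrow> (b \<otimes> x) \<otimes> b \<otimes> c \<otimes> (w \<otimes> c) = b \<otimes> (w \<otimes> c) \<otimes> (b \<otimes> x) \<otimes> c"
proof -
  have "(b \<otimes> x) \<otimes> b \<otimes> c \<otimes> (w \<otimes> c) = b \<otimes> (x \<otimes> b \<otimes> c \<otimes> w) \<otimes> c"
    and "b \<otimes> (w \<otimes> c) \<otimes> (b \<otimes> x) \<otimes> c = b \<otimes> (w \<otimes> c \<otimes> b \<otimes> x) \<otimes> c"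
    using assms by (simp_all add: m_assoc)
  then show ?thesis
    using assms by simp
qed

lemma reversal_iff_word_3142:
  assumes "x1 \<in> carrier G" "x2 \<in> carrier G" "x3 \<in> carrier G" "x4 \<in> carrier G"
  shows "x1 \<otimes> x2 \<otimes> x3 \<otimes> x4 = x4 \<otimes> x3 \<otimes> x2 \<otimes> x1
     \<longleftrightarrow> (x2 \<otimes> inv x4) \<otimes> x1 \<otimes> (x2 \<otimes> x3) \<otimes> x4 = (x2 \<otimes> x3) \<otimes> (x2 \<otimes> inv x4) \<otimes> x4 \<otimes> x1"
proof -
  have "(x2 \<otimes> inv x4) \<otimes> x1 \<otimes> (x2 \<otimes> x3) \<otimes> x4 = (x2 \<otimes> inv x4) \<otimes> (x1 \<otimes> x2 \<otimes> x3 \<otimes> x4)"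
    and "(x2 \<otimes> x3) \<otimes> (x2 \<otimes> inv x4) \<otimes> x4 \<otimes> x1 = (x2 \<otimes> inv x4) \<otimes> (x4 \<otimes> x3 \<otimes> x2 \<otimes> x1)"
    using assms by (simp_all add: m_assoc)
  then show ?thesis
    using assms by simp
qed

lemma Pr4_eq_prob4_word_2413:
  "Pr4 G = prob4 G (\<lambda>a1 a2 a3 a4. a1 \<otimes> a2 \<otimes> a3 \<otimes> a4 = a2 \<otimes> a4 \<otimes> a1 \<otimes> a3)"
  unfolding Pr4_def
  by (rule prob4_eq_if_bij_betw[OF bij_betw_substitution_2413]) (simp add: reversal_iff_word_2413)

lemma Pr4_eq_prob4_word_3142:
  "Pr4 G = prob4 G (\<lambda>a1 a2 a3 a4. a1 \<otimes> a2 \<otimes> a3 \<otimes> a4 = a3 \<otimes> a1 \<otimes> a4 \<otimes> a2)"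
  unfolding Pr4_def
  by (rule prob4_eq_if_bij_betw[OF bij_betw_substitution_3142]) (simp add: reversal_iff_word_3142)

end

theorem mainTheorem9:
  fixes G :: "('a, 'b) monoid_scheme"
  assumes "group G" and "finite (carrier G)"
  shows "prob4 G (\<lambda>a1 a2 a3 a4.
           a1 \<otimes>\<^bsub>G\<^esub> a2 \<otimes>\<^bsub>G\<^esub> a3 \<otimes>\<^bsub>G\<^esub> a4 = a2 \<otimes>\<^bsub>G\<^esub> a4 \<otimes>\<^bsub>G\<^esub> a1 \<otimes>\<^bsub>G\<^esub> a3) = Pr4 G
       \<and> prob4 G (\<lambda>a1 a2 a3 a4.
           a1 \<otimes>\<^bsub>G\<^esub> a2 \<otimes>\<^bsub>G\<^esub> a3 \<otimes>\<^bsub>G\<^esub> a4 = a3 \<otimes>\<^bsub>G\<^esub> a1 \<otimes>\<^bsub>G\<^esub> a4 \<otimes>\<^bsub>G\<^esub> a2) = Pr4 G"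
  using group.Pr4_eq_prob4_word_2413[OF assms(1)] group.Pr4_eq_prob4_word_3142[OF assms(1)]
  by simp

end
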